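(* Let $(A_0,A_1,\partial_0,\partial_1,s)$ be a 1-truncated simplicial ring. Let $B=\{(f,g)\mid f,g\in A_1,\ \partial_1(f)=\partial_0(g)\}$, a subring of $A_1\times A_1$. Then the map $B\to A_1$, $(f,g)\mapsto f+g-s(a)$ with $a=\partial_1(f)=\partial_0(g)$, is a ring homomorphism if and only if $(\ker\partial_0)\cdot(\ker\partial_1)=0$.
   Context: Rings are commutative and unital. A 1-truncated simplicial ring is a collection of rings $A_0,A_1$ and ring homomorphisms $\partial_0,\partial_1:A_1\to A_0$, $s:A_0\to A_1$ with $\partial_0 s=\partial_1 s=\mathrm{id}_{A_0}$. *)

theory Defs
  imports "HOL-Algebra.Algebra"
begin

definition trunc1_simplicial_ring ::
  "('a, 'm) ring_scheme \<Rightarrow> ('b, 'n) ring_scheme \<Rightarrow> ('b \<Rightarrow> 'a) \<Rightarrow> ('b \<Rightarrow> 'a) \<Rightarrow> ('a \<Rightarrow> 'b) \<Rightarrow> bool"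
where
  "trunc1_simplicial_ring A0 A1 d0 d1 s \<longleftrightarrow>
     cring A0 \<and> cring A1 \<and>
     d0 \<in> ring_hom A1 A0 \<and> d1 \<in> ring_hom A1 A0 \<and> s \<in> ring_hom A0 A1 \<and>
     (\<forall>a \<in> carrier A0. d0 (s a) = a) \<and> (\<forall>a \<in> carrier A0. d1 (s a) = a)"

definition composable_pairs ::
  "('b, 'n) ring_scheme \<Rightarrow> ('b \<Rightarrow> 'a) \<Rightarrow> ('b \<Rightarrow> 'a) \<Rightarrow> ('b \<times> 'b) ring"
where
  "composable_pairs A1 d0 d1 =
     (RDirProd A1 A1)\<lparr>carrier := {(f, g). f \<in> carrier A1 \<and> g \<in> carrier A1 \<and> d1 f = d0 g}\<rparr>"

definition compose_map ::
  "('b, 'n) ring_scheme \<Rightarrow> ('b \<Rightarrow> 'a) \<Rightarrow> ('a \<Rightarrow> 'b) \<Rightarrow> 'b \<times> 'b \<Rightarrow> 'b"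
where
  "compose_map A1 d1 s = (\<lambda>(f, g). f \<oplus>\<^bsub>A1\<^esub> g \<ominus>\<^bsub>A1\<^esub> s (d1 f))"

end

theory Submission
  imports Defs
begin

text \<open>Write \<open>p = s a\<close> for a composable pair \<open>(f, g)\<close> over \<open>a\<close>. Then \<open>f - p\<close> lies in
  \<open>ker \<partial>\<^sub>1\<close> and \<open>g - p\<close> in \<open>ker \<partial>\<^sub>0\<close>, and expanding shows that the composition map fails to be
  multiplicative exactly by the cross terms \<open>(f - p)(g' - q) + (g - p)(f' - q)\<close>, which are
  products of an element of \<open>ker \<partial>\<^sub>1\<close> with one of \<open>ker \<partial>\<^sub>0\<close>. Conversely, for \<open>y \<in> ker \<partial>\<^sub>1\<close>
  and \<open>x \<in> ker \<partial>\<^sub>0\<close> the pairs \<open>(y, 0)\<close> and \<open>(0, x)\<close> are composable with product \<open>(0, 0)\<close>,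
  while their images are \<open>y\<close> and \<open>x\<close>.\<close>

lemma (in ring) ideal_prod_eq_zero_iff:
  assumes "ideal I R" "ideal J R"
  shows "I \<cdot> J = {\<zero>} \<longleftrightarrow> (\<forall>i\<in>I. \<forall>j\<in>J. i \<otimes> j = \<zero>)"
proof
  assume "I \<cdot> J = {\<zero>}"
  then show "\<forall>i\<in>I. \<forall>j\<in>J. i \<otimes> j = \<zero>"
    using ideal_prod.prod[of _ I _ J R] by blast
next
  assume zero_products: "\<forall>i\<in>I. \<forall>j\<in>J. i \<otimes> j = \<zero>"
  have "x = \<zero>" if "x \<in> I \<cdot> J" for x
    using that by (induct x rule: ideal_prod.induct) (use zero_products in auto)
  moreover have "\<zero> \<in> I \<cdot> J"
    using ideal_prod.prod[of \<zero> I \<zero> J R] assms by (simp add: additive_subgroup.zero_closed ideal.axioms(1))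
  ultimately show "I \<cdot> J = {\<zero>}" by blast
qed

lemma (in cring) add_minus_mult_cross_terms:
  assumes "f \<in> carrier R" "g \<in> carrier R" "f' \<in> carrier R" "g' \<in> carrier R"
    "p \<in> carrier R" "q \<in> carrier R"
  shows "(f \<oplus> g \<ominus> p) \<otimes> (f' \<oplus> g' \<ominus> q) =
         f \<otimes> f' \<oplus> g \<otimes> g' \<ominus> p \<otimes> q \<oplus> (f \<ominus> p) \<otimes> (g' \<ominus> q) \<oplus> (g \<ominus> p) \<otimes> (f' \<ominus> q)"
  using assms by algebra

lemma (in ring_hom_ring) minus_mem_kernel:
  assumes "x \<in> carrier R" "y \<in> carrier R" "h x = h y"
  shows "x \<ominus>\<^bsub>R\<^esub> y \<in> a_kernel R S h"
proof -
  have "h (x \<ominus>\<^bsub>R\<^esub> y) = h x \<ominus>\<^bsub>S\<^esub> h y"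
    using assms(1,2) by (simp add: a_minus_def)
  also have "\<dots> = \<zero>\<^bsub>S\<^esub>"
    using assms by (simp add: a_minus_def S.r_neg)
  finally show ?thesis
    using assms(1,2) unfolding a_kernel_def' by blast
qed

lemma composable_pairs_carrier:
  "carrier (composable_pairs A1 d0 d1) = {(f, g). f \<in> carrier A1 \<and> g \<in> carrier A1 \<and> d1 f = d0 g}"
  unfolding composable_pairs_def by simp

lemma composable_pairs_mult:
  "(f, g) \<otimes>\<^bsub>composable_pairs A1 d0 d1\<^esub> (f', g') = (f \<otimes>\<^bsub>A1\<^esub> f', g \<otimes>\<^bsub>A1\<^esub> g')"
  unfolding composable_pairs_def RDirProd_def DirProd_def by (simp add: monoid.defs)

lemma composable_pairs_add:
  "(f, g) \<oplus>\<^bsub>composable_pairs A1 d0 d1\<^esub> (f', g') = (f \<oplus>\<^bsub>A1\<^esub> f', g \<oplus>\<^bsub>A1\<^esub> g')"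
  unfolding composable_pairs_def RDirProd_def DirProd_def by (simp add: monoid.defs)

lemma composable_pairs_one:
  "\<one>\<^bsub>composable_pairs A1 d0 d1\<^esub> = (\<one>\<^bsub>A1\<^esub>, \<one>\<^bsub>A1\<^esub>)"
  unfolding composable_pairs_def RDirProd_def DirProd_def by (simp add: monoid.defs)

lemma compose_map_apply [simp]:
  "compose_map A1 d1 s (f, g) = f \<oplus>\<^bsub>A1\<^esub> g \<ominus>\<^bsub>A1\<^esub> s (d1 f)"
  by (simp add: compose_map_def)

locale trunc1_simplicial =
  fixes A1 :: "('b, 'n) ring_scheme" (structure)
    and A0 :: "('a, 'm) ring_scheme" and d0 d1 :: "'b \<Rightarrow> 'a" and s :: "'a \<Rightarrow> 'b"
  assumes trunc1_simplicial_ring: "trunc1_simplicial_ring A0 A1 d0 d1 s"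
begin

sublocale cring A1
  using trunc1_simplicial_ring by (simp add: trunc1_simplicial_ring_def)

sublocale A0: cring A0
  using trunc1_simplicial_ring by (simp add: trunc1_simplicial_ring_def)

sublocale d0: ring_hom_ring A1 A0 d0
  using trunc1_simplicial_ring
  by (intro ring_hom_ringI2) (auto simp: trunc1_simplicial_ring_def cring.axioms(1))

sublocale d1: ring_hom_ring A1 A0 d1
  using trunc1_simplicial_ring
  by (intro ring_hom_ringI2) (auto simp: trunc1_simplicial_ring_def cring.axioms(1))

sublocale s: ring_hom_ring A0 A1 s
  using trunc1_simplicial_ring
  by (intro ring_hom_ringI2) (auto simp: trunc1_simplicial_ring_def cring.axioms(1))

lemma d0_s [simp]: "a \<in> carrier A0 \<Longrightarrow> d0 (s a) = a"
  and d1_s [simp]: "a \<in> carrier A0 \<Longrightarrow> d1 (s a) = a"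
  using trunc1_simplicial_ring by (auto simp: trunc1_simplicial_ring_def)

lemma minus_s_d0_mem_kernel: "g \<in> carrier A1 \<Longrightarrow> g \<ominus> s (d0 g) \<in> a_kernel A1 A0 d0"
  by (rule d0.minus_mem_kernel) simp_all

lemma minus_s_d1_mem_kernel: "f \<in> carrier A1 \<Longrightarrow> f \<ominus> s (d1 f) \<in> a_kernel A1 A0 d1"
  by (rule d1.minus_mem_kernel) simp_all

lemma compose_map_mult_defect:
  assumes "(f, g) \<in> carrier (composable_pairs A1 d0 d1)" "(f', g') \<in> carrier (composable_pairs A1 d0 d1)"
  shows "compose_map A1 d1 s (f, g) \<otimes> compose_map A1 d1 s (f', g') =
           compose_map A1 d1 s ((f, g) \<otimes>\<^bsub>composable_pairs A1 d0 d1\<^esub> (f', g'))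
         \<oplus> (f \<ominus> s (d1 f)) \<otimes> (g' \<ominus> s (d0 g')) \<oplus> (g \<ominus> s (d0 g)) \<otimes> (f' \<ominus> s (d1 f'))"
proof -
  have carr: "f \<in> carrier A1" "g \<in> carrier A1" "f' \<in> carrier A1" "g' \<in> carrier A1"
    and composable: "d0 g = d1 f" "d0 g' = d1 f'"
    using assms by (auto simp: composable_pairs_carrier)
  have "s (d1 (f \<otimes> f')) = s (d1 f) \<otimes> s (d1 f')"
    using carr by simp
  then show ?thesis
    unfolding composable composable_pairs_mult compose_map_apply
    using add_minus_mult_cross_terms carr by simp
qed

lemma compose_map_add:
  assumes "u \<in> carrier (composable_pairs A1 d0 d1)" "v \<in> carrier (composable_pairs A1 d0 d1)"
  shows "compose_map A1 d1 s (u \<oplus>\<^bsub>composable_pairs A1 d0 d1\<^esub> v) =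
         compose_map A1 d1 s u \<oplus> compose_map A1 d1 s v"
proof -
  obtain f g f' g' where uv: "u = (f, g)" "v = (f', g')"
    and carr: "f \<in> carrier A1" "g \<in> carrier A1" "f' \<in> carrier A1" "g' \<in> carrier A1"
    using assms by (auto simp: composable_pairs_carrier)
  show ?thesis
    unfolding uv composable_pairs_add using carr by (simp add: a_minus_def minus_add a_ac)
qed

lemma compose_map_one: "compose_map A1 d1 s \<one>\<^bsub>composable_pairs A1 d0 d1\<^esub> = \<one>"
  by (simp add: composable_pairs_one a_minus_def add.m_assoc add.r_inv)

lemma kernel_products_vanish_if_compose_map_hom:
  assumes hom: "compose_map A1 d1 s \<in> ring_hom (composable_pairs A1 d0 d1) A1"
    and x: "x \<in> a_kernel A1 A0 d0" and y: "y \<in> a_kernel A1 A0 d1"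
  shows "x \<otimes> y = \<zero>"
proof -
  have carr: "x \<in> carrier A1" "y \<in> carrier A1" and "d0 x = \<zero>\<^bsub>A0\<^esub>" "d1 y = \<zero>\<^bsub>A0\<^esub>"
    using x y unfolding a_kernel_def' by blast+
  then have pairs: "(y, \<zero>) \<in> carrier (composable_pairs A1 d0 d1)"
    "(\<zero>, x) \<in> carrier (composable_pairs A1 d0 d1)"
    by (simp_all add: composable_pairs_carrier)
  have "y \<otimes> x = compose_map A1 d1 s (y, \<zero>) \<otimes> compose_map A1 d1 s (\<zero>, x)"
    using carr \<open>d1 y = \<zero>\<^bsub>A0\<^esub>\<close> by (simp add: a_minus_def)
  also have "\<dots> = compose_map A1 d1 s ((y, \<zero>) \<otimes>\<^bsub>composable_pairs A1 d0 d1\<^esub> (\<zero>, x))"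
    by (rule ring_hom_mult[OF hom pairs, symmetric])
  also have "\<dots> = \<zero>"
    using carr by (simp add: composable_pairs_mult a_minus_def)
  finally show ?thesis
    using m_comm[OF carr] by simp
qed

lemma compose_map_hom_if_kernel_products_vanish:
  assumes zero_products: "\<forall>x\<in>a_kernel A1 A0 d0. \<forall>y\<in>a_kernel A1 A0 d1. x \<otimes> y = \<zero>"
  shows "compose_map A1 d1 s \<in> ring_hom (composable_pairs A1 d0 d1) A1"
proof (rule ring_hom_memI)
  fix u assume "u \<in> carrier (composable_pairs A1 d0 d1)"
  then show "compose_map A1 d1 s u \<in> carrier A1"
    by (auto simp: composable_pairs_carrier)
next
  fix u v assume u: "u \<in> carrier (composable_pairs A1 d0 d1)" and v: "v \<in> carrier (composable_pairs A1 d0 d1)"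
  obtain f g f' g' where uv: "u = (f, g)" "v = (f', g')"
    and carr: "f \<in> carrier A1" "g \<in> carrier A1" "f' \<in> carrier A1" "g' \<in> carrier A1"
    using u v by (auto simp: composable_pairs_carrier)
  have "(g' \<ominus> s (d0 g')) \<otimes> (f \<ominus> s (d1 f)) = \<zero>" "(g \<ominus> s (d0 g)) \<otimes> (f' \<ominus> s (d1 f')) = \<zero>"
    using zero_products carr minus_s_d0_mem_kernel minus_s_d1_mem_kernel by blast+
  moreover have "compose_map A1 d1 s (u \<otimes>\<^bsub>composable_pairs A1 d0 d1\<^esub> v) \<in> carrier A1"
    using u v uv carr by (simp add: composable_pairs_mult)
  ultimately show "compose_map A1 d1 s (u \<otimes>\<^bsub>composable_pairs A1 d0 d1\<^esub> v) =
                   compose_map A1 d1 s u \<otimes> compose_map A1 d1 s v"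
    using compose_map_mult_defect[OF u[unfolded uv] v[unfolded uv]] carr uv
    by (simp add: m_comm)
next
  fix u v assume "u \<in> carrier (composable_pairs A1 d0 d1)" "v \<in> carrier (composable_pairs A1 d0 d1)"
  then show "compose_map A1 d1 s (u \<oplus>\<^bsub>composable_pairs A1 d0 d1\<^esub> v) =
             compose_map A1 d1 s u \<oplus> compose_map A1 d1 s v"
    by (rule compose_map_add)
qed (rule compose_map_one)

end

theorem lemma3p4p5:
  fixes A0 :: "('a, 'm) ring_scheme" and A1 :: "('b, 'n) ring_scheme"
    and d0 d1 :: "'b \<Rightarrow> 'a" and s :: "'a \<Rightarrow> 'b"
  assumes "trunc1_simplicial_ring A0 A1 d0 d1 s"
  shows "compose_map A1 d1 s \<in> ring_hom (composable_pairs A1 d0 d1) A1 \<longleftrightarrow>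
         ideal_prod A1 (a_kernel A1 A0 d0) (a_kernel A1 A0 d1) = {\<zero>\<^bsub>A1\<^esub>}"
proof -
  interpret trunc1_simplicial A1 A0 d0 d1 s
    using assms by unfold_locales
  show ?thesis
    unfolding ideal_prod_eq_zero_iff[OF d0.kernel_is_ideal d1.kernel_is_ideal]
    using kernel_products_vanish_if_compose_map_hom compose_map_hom_if_kernel_products_vanish
    by blast
qed

end
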